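(* Let $X$ be a CFG-space over a Boolean ring $B$ and $0\in X$. Then the pointed space $(X,0)$ possesses a base.
   Context: $B$ is a Boolean ring ($a\vee b=a+b+ab$, $a\le b\iff ab=a$, $\bar a=1+a$; $a_1\oplus\cdots\oplus a_n$ denotes a sum of pairwise disjoint elements). A Boolean metric space over $B$: set $X$ with $d:X\times X\to B$, $d(x,y)=0\iff x=y$, symmetric, $d(x,z)\le d(x,y)\vee d(y,z)$. For $x_1,\dots,x_n\in X$ and $a_1,\dots,a_n\in B$ with $a_1\oplus\cdots\oplus a_n=1$, $x$ is a convex combination of the $x_i$ with coefficients $a_i$ if $a_id(x,x_i)=0$ for all $i$. $X$ is convex if all such combinations exist; a CFG-space is a convex space in which every element is a convex combination of elements of some fixed finite subset. In a pointed space $(X,0)$ write $|x|=d(0,x)$. Two elements $x,y$ are orthogonal if $d(x,y)=|x|\vee|y|$. A finite set $R\subseteq X$ is orthogonal if $0\notin R$ and any two distinct elements of $R$ are orthogonal. A referential (reference system) of $(X,0)$ is an orthogonal set $R$ such that every element of $X$ is a convex combination of elements of $R\cup\{0\}$. A base of $(X,0)$ is a referential $\{x_1,\dots,x_n\}$ with $|x_1|\ge|x_2|\ge\cdots\ge|x_n|$. *)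

theory Defs
  imports Main
begin

text \<open>A Boolean ring with unit is the same thing as a Boolean algebra, via
  a*b = inf a b, a+b = symmetric difference, 0 = bot, 1 = top;
  then a \<or> b = a+b+ab = sup a b, a \<le> b iff ab = a is the lattice order,
  and 1+a = - a.\<close>

fun bjoin :: "(nat \<Rightarrow> 'b::boolean_algebra) \<Rightarrow> nat \<Rightarrow> 'b" where
  "bjoin a 0 = bot"
| "bjoin a (Suc n) = sup (bjoin a n) (a n)"

text \<open>a_0 \<oplus> ... \<oplus> a_(n-1) = 1 : pairwise disjoint with sum 1
  (for pairwise disjoint elements the ring sum is the join).\<close>
definition disj_partition :: "(nat \<Rightarrow> 'b::boolean_algebra) \<Rightarrow> nat \<Rightarrow> bool" where
  "disj_partition a n \<longleftrightarrow>
     (\<forall>i<n. \<forall>j<n. i \<noteq> j \<longrightarrow> inf (a i) (a j) = bot) \<and> bjoin a n = top"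

definition bool_metric_space :: "'a set \<Rightarrow> ('a \<Rightarrow> 'a \<Rightarrow> 'b::boolean_algebra) \<Rightarrow> bool" where
  "bool_metric_space X d \<longleftrightarrow>
     (\<forall>x\<in>X. \<forall>y\<in>X. (d x y = bot \<longleftrightarrow> x = y)) \<and>
     (\<forall>x\<in>X. \<forall>y\<in>X. d x y = d y x) \<and>
     (\<forall>x\<in>X. \<forall>y\<in>X. \<forall>z\<in>X. d x z \<le> sup (d x y) (d y z))"

definition convex_comb ::
  "('a \<Rightarrow> 'a \<Rightarrow> 'b::boolean_algebra) \<Rightarrow> 'a \<Rightarrow> (nat \<Rightarrow> 'a) \<Rightarrow> (nat \<Rightarrow> 'b) \<Rightarrow> nat \<Rightarrow> bool" where
  "convex_comb d x xs a n \<longleftrightarrow> disj_partition a n \<and> (\<forall>i<n. inf (a i) (d x (xs i)) = bot)"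

definition bconvex :: "'a set \<Rightarrow> ('a \<Rightarrow> 'a \<Rightarrow> 'b::boolean_algebra) \<Rightarrow> bool" where
  "bconvex X d \<longleftrightarrow>
     (\<forall>n xs a. (\<forall>i<n. xs i \<in> X) \<and> disj_partition a n \<longrightarrow> (\<exists>x\<in>X. convex_comb d x xs a n))"

definition conv_comb_of :: "('a \<Rightarrow> 'a \<Rightarrow> 'b::boolean_algebra) \<Rightarrow> 'a set \<Rightarrow> 'a \<Rightarrow> bool" where
  "conv_comb_of d S x \<longleftrightarrow> (\<exists>n xs a. (\<forall>i<n. xs i \<in> S) \<and> convex_comb d x xs a n)"

definition CFG_space :: "'a set \<Rightarrow> ('a \<Rightarrow> 'a \<Rightarrow> 'b::boolean_algebra) \<Rightarrow> bool" where
  "CFG_space X d \<longleftrightarrow> bool_metric_space X d \<and> bconvex X d \<and>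
     (\<exists>F. finite F \<and> F \<subseteq> X \<and> (\<forall>x\<in>X. conv_comb_of d F x))"

text \<open>Pointed space (X, z): |x| = d z x.\<close>
definition orthogonal :: "('a \<Rightarrow> 'a \<Rightarrow> 'b::boolean_algebra) \<Rightarrow> 'a \<Rightarrow> 'a \<Rightarrow> 'a \<Rightarrow> bool" where
  "orthogonal d z x y \<longleftrightarrow> d x y = sup (d z x) (d z y)"

definition orthogonal_set :: "'a set \<Rightarrow> ('a \<Rightarrow> 'a \<Rightarrow> 'b::boolean_algebra) \<Rightarrow> 'a \<Rightarrow> 'a set \<Rightarrow> bool" where
  "orthogonal_set X d z R \<longleftrightarrow> finite R \<and> R \<subseteq> X \<and> z \<notin> R \<and>
     (\<forall>x\<in>R. \<forall>y\<in>R. x \<noteq> y \<longrightarrow> orthogonal d z x y)"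

definition referential :: "'a set \<Rightarrow> ('a \<Rightarrow> 'a \<Rightarrow> 'b::boolean_algebra) \<Rightarrow> 'a \<Rightarrow> 'a set \<Rightarrow> bool" where
  "referential X d z R \<longleftrightarrow> orthogonal_set X d z R \<and>
     (\<forall>x\<in>X. conv_comb_of d (insert z R) x)"

definition is_base :: "'a set \<Rightarrow> ('a \<Rightarrow> 'a \<Rightarrow> 'b::boolean_algebra) \<Rightarrow> 'a \<Rightarrow> 'a list \<Rightarrow> bool" where
  "is_base X d z xs \<longleftrightarrow> distinct xs \<and> referential X d z (set xs) \<and>
     (\<forall>i j. i < j \<and> j < length xs \<longrightarrow> d z (xs ! j) \<le> d z (xs ! i))"

end

theory Submission imports Defs begin

(* Write close_to S x when no nonzero b lies below all distances d x s, s in S; for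
   finite S this is equivalent to x being a convex combination of S, and in a
   Boolean metric space it is transitive.  So it suffices to build a finite
   orthogonal family with decreasing norms such that every element of a finite
   generating set F is close to it together with z.

   Such an "orthogonal chain" is built by induction over F.  The refinement step
   absorbs one new point y: the "fresh" region where y differs from z and from
   every chain element is cut along the levels |x_0| >= |x_1| >= ... into disjoint
   slices E_k.  Patching x_k to agree with y on E_k (possible by convexity) gives a
   new chain with norms |x_k| v E_k, and both y and the old chain are close to the
   new chain.  Listing the final chain gives the base. *)

lemma eq_by_cases:
  fixes u :: "'b::boolean_algebra"
  assumes "inf p u = inf p v" "inf (-p) u = inf (-p) v"
  shows "u = v"
proof -
  have "u = sup (inf p u) (inf (-p) u)" by (simp add: inf_sup_distrib2[symmetric])
  also have "\<dots> = sup (inf p v) (inf (-p) v)" using assms by simp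
  also have "\<dots> = v" by (simp add: inf_sup_distrib2[symmetric])
  finally show ?thesis .
qed

lemma eq_by_three_cases:
  fixes u :: "'b::boolean_algebra"
  assumes "inf p q = bot" "inf p u = inf p v" "inf q u = inf q v"
    and "inf (inf (-p) (-q)) u = inf (inf (-p) (-q)) v"
  shows "u = v"
proof (rule eq_by_cases[of p])
  show "inf p u = inf p v" by fact
  have "q \<le> -p" using assms(1) by (metis inf_shunt inf_commute)
  hence q_part: "inf q (-p) = q" by (simp add: inf_absorb1)
  show "inf (-p) u = inf (-p) v"
  proof (rule eq_by_cases[of q])
    show "inf q (inf (-p) u) = inf q (inf (-p) v)"
      using q_part assms(3) by (metis inf_assoc)
    have "inf (-q) (inf (-p) w) = inf (inf (-p) (-q)) w" for w by (simp add: inf_aci)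
    then show "inf (-q) (inf (-p) u) = inf (-q) (inf (-p) v)"
      by (simp only: assms(4))
  qed
qed

lemma inf_bot_mono:
  assumes "(q::'b::boolean_algebra) \<le> p" "inf p c = bot"
  shows "inf q c = bot"
proof -
  have "inf q c \<le> inf p c" using assms(1) by (rule inf_mono) simp
  thus ?thesis using assms(2) by (simp add: le_bot)
qed

lemma inf_bjoin_bot: "(\<forall>i<n. inf b (a i) = bot) \<Longrightarrow> inf b (bjoin a n) = bot"
  by (induction n) (auto simp: inf_sup_distrib1)

fun bmeet :: "(nat \<Rightarrow> 'b::boolean_algebra) \<Rightarrow> nat \<Rightarrow> 'b" where
  "bmeet g 0 = top"
| "bmeet g (Suc i) = inf (bmeet g i) (g i)"

lemma bmeet_le: "i < n \<Longrightarrow> bmeet g n \<le> g i"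
  by (induction n) (auto intro: le_infI1 simp: less_Suc_eq)

lemma le_bmeet: "(\<forall>i<n. b \<le> g i) \<Longrightarrow> b \<le> bmeet g n"
  by (induction n) auto

text \<open>The pieces -g 0, g 0 \<sqinter> -g 1, g 0 \<sqinter> g 1 \<sqinter> -g 2, ... are the coefficients read
  off from distances; their join is the complement of the meet.\<close>
lemma bjoin_meet_slices: "bjoin (\<lambda>i. inf (bmeet g i) (- g i)) n = - bmeet g n"
  by (induction n) (simp_all add: sup_inf_distrib1)

section \<open>Closeness and convex combinations\<close>

definition close_to :: "('a \<Rightarrow> 'a \<Rightarrow> 'b::boolean_algebra) \<Rightarrow> 'a set \<Rightarrow> 'a \<Rightarrow> bool" where
  "close_to d S x \<longleftrightarrow> (\<forall>b. (\<forall>s\<in>S. b \<le> d x s) \<longrightarrow> b = bot)"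

text \<open>A convex combination of S is close to S: b vanishes on every coefficient.\<close>
lemma conv_comb_close_to: "conv_comb_of d S x \<Longrightarrow> close_to d S x"
  unfolding close_to_def conv_comb_of_def convex_comb_def disj_partition_def
proof (intro allI impI, elim exE conjE)
  fix b n xs a
  assume h: "\<forall>s\<in>S. b \<le> d x s" "\<forall>i<n. xs i \<in> S" "bjoin a n = top"
    "\<forall>i<n. inf (a i) (d x (xs i)) = bot"
  have "\<forall>i<n. inf b (a i) = bot"
    using h(1,2,4) inf_bot_mono[of b "d x (xs _)"] by (metis inf_commute)
  hence "inf b (bjoin a n) = bot" by (rule inf_bjoin_bot)
  thus "b = bot" using h(3) by simp
qed

text \<open>Conversely, enumerating a finite S as s_0, ..., s_(m-1), the coefficients
  d(x,s_0) \<sqinter> ... \<sqinter> d(x,s_(i-1)) \<sqinter> -d(x,s_i) exhibit x as a convex combination.\<close>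
lemma close_to_conv_comb:
  assumes "finite S" "close_to d S x"
  shows "conv_comb_of d S x"
proof -
  obtain l where l: "set l = S" using finite_list assms(1) by blast
  define m where "m = length l"
  define g where "g = (\<lambda>i. d x (l ! i))"
  define a where "a = (\<lambda>i. inf (bmeet g i) (- g i))"
  have "bmeet g m \<le> d x t" if "t \<in> S" for t
    using that l bmeet_le unfolding m_def g_def by (auto simp: in_set_conv_nth)
  hence "bmeet g m = bot" using assms(2) unfolding close_to_def by blast
  hence join: "bjoin a m = top" unfolding a_def bjoin_meet_slices by simp
  have disj: "inf (a i) (a j) = bot" if "i < j" for i j
  proof -
    have "a i \<le> - g i" "a j \<le> g i"
      using bmeet_le[OF that] unfolding a_def by (auto intro: le_infI1)
    then have "inf (a i) (a j) \<le> inf (- g i) (g i)" by (rule inf_mono)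
    thus ?thesis by (simp add: le_bot)
  qed
  have "convex_comb d x (\<lambda>i. l ! i) a m"
    unfolding convex_comb_def disj_partition_def
  proof (intro conjI allI impI join)
    fix i j assume "i < m" "j < m" "i \<noteq> j"
    then show "inf (a i) (a j) = bot"
      using disj[of i j] disj[of j i] by (auto simp: inf_commute linorder_neq_iff)
  next
    fix i show "inf (a i) (d x (l ! i)) = bot" unfolding a_def g_def by (simp add: inf_assoc)
  qed
  moreover have "\<forall>i<m. l ! i \<in> S" using l unfolding m_def by auto
  ultimately show ?thesis unfolding conv_comb_of_def by blast
qed

locale bms =
  fixes X :: "'a set" and d :: "'a \<Rightarrow> 'a \<Rightarrow> 'b::boolean_algebra"
  assumes metric: "bool_metric_space X d"
begin

lemma dist_eq_bot: "x \<in> X \<Longrightarrow> y \<in> X \<Longrightarrow> d x y = bot \<longleftrightarrow> x = y"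
  using metric unfolding bool_metric_space_def by blast

lemma dist_sym: "x \<in> X \<Longrightarrow> y \<in> X \<Longrightarrow> d x y = d y x"
  using metric unfolding bool_metric_space_def by blast

lemma dist_triangle: "x \<in> X \<Longrightarrow> y \<in> X \<Longrightarrow> w \<in> X \<Longrightarrow> d x w \<le> sup (d x y) (d y w)"
  using metric unfolding bool_metric_space_def by blast

lemma dist_self [simp]: "x \<in> X \<Longrightarrow> d x x = bot"
  using dist_eq_bot by blast

lemma agree_dist_left:
  assumes "u \<in> X" "v \<in> X" "q \<in> X" "inf p (d u v) = bot"
  shows "inf p (d u q) = inf p (d v q)"
proof (rule order.antisym)
  have "inf p (d u q) \<le> inf p (sup (d u v) (d v q))"
    by (rule inf_mono[OF order_refl dist_triangle[OF assms(1,2,3)]])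
  also have "\<dots> = inf p (d v q)" using assms(4) by (simp add: inf_sup_distrib1)
  finally show "inf p (d u q) \<le> inf p (d v q)" .
  have "inf p (d v q) \<le> inf p (sup (d v u) (d u q))"
    by (rule inf_mono[OF order_refl dist_triangle[OF assms(2,1,3)]])
  also have "\<dots> = inf p (d u q)"
    using assms(4) dist_sym[OF assms(1,2)] by (simp add: inf_sup_distrib1)
  finally show "inf p (d v q) \<le> inf p (d u q)" .
qed

lemma agree_dist_right:
  assumes "u \<in> X" "v \<in> X" "q \<in> X" "inf p (d u v) = bot"
  shows "inf p (d q u) = inf p (d q v)"
  using agree_dist_left[OF assms] dist_sym assms(1-3) by metis

lemma close_to_member: "x \<in> S \<Longrightarrow> x \<in> X \<Longrightarrow> close_to d S x"
  unfolding close_to_def by (metis dist_self le_bot)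

text \<open>On the part of b where f differs from s \<in> S, b lies below
  d s t for all t, hence vanishes.\<close>
lemma close_to_trans:
  assumes "S \<subseteq> X" "T \<subseteq> X" "f \<in> X" "close_to d S f" "\<forall>s\<in>S. close_to d T s"
  shows "close_to d T f"
  unfolding close_to_def
proof (intro allI impI)
  fix b assume hb: "\<forall>t\<in>T. b \<le> d f t"
  have "b \<le> d f s" if s: "s \<in> S" for s
  proof -
    define c where "c = inf b (- d f s)"
    have "c \<le> d s t" if t: "t \<in> T" for t
    proof -
      have "c \<le> inf (sup (d f s) (d s t)) (- d f s)"
        using hb t dist_triangle[OF assms(3), of s t] assms(1,2) s
        unfolding c_def by (auto intro: le_infI1 order_trans)
      also have "\<dots> \<le> d s t" by (simp add: inf_sup_distrib2)
      finally show ?thesis .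
    qed
    hence "c = bot" using assms(5) s unfolding close_to_def by blast
    thus ?thesis unfolding c_def by (simp add: inf_shunt)
  qed
  thus "b = bot" using assms(4) unfolding close_to_def by blast
qed

end

locale pointed_convex = bms +
  fixes z :: 'a
  assumes base_point: "z \<in> X" and convex: "bconvex X d"
begin

text \<open>Convexity with two points: some x agrees with y on p and with w off p.\<close>
lemma patch_exists:
  assumes "y \<in> X" "w \<in> X"
  shows "\<exists>x\<in>X. inf p (d x y) = bot \<and> inf (-p) (d x w) = bot"
proof -
  define xs where "xs = (\<lambda>i::nat. if i = 0 then y else w)"
  define a where "a = (\<lambda>i::nat. if i = 0 then p else -p)"
  have "disj_partition a 2"
    unfolding disj_partition_def a_def by (auto simp: numeral_2_eq_2 less_Suc_eq inf_commute)
  moreover have "\<forall>i<2. xs i \<in> X" using assms unfolding xs_def by simp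
  ultimately obtain x where "x \<in> X" "convex_comb d x xs a 2"
    using convex unfolding bconvex_def by blast
  then have "x \<in> X" "inf (a 0) (d x (xs 0)) = bot" "inf (a 1) (d x (xs 1)) = bot"
    unfolding convex_comb_def by auto
  then show ?thesis unfolding a_def xs_def by auto
qed

definition orth_chain :: "(nat \<Rightarrow> 'a) \<Rightarrow> nat \<Rightarrow> bool" where
  "orth_chain x n \<longleftrightarrow> (\<forall>i<n. x i \<in> X \<and> x i \<noteq> z) \<and>
     (\<forall>i j. i < j \<longrightarrow> j < n \<longrightarrow>
        d (x i) (x j) = sup (d z (x i)) (d z (x j)) \<and> d z (x j) \<le> d z (x i))"

end

section \<open>Refining a chain by one point\<close>

text \<open>Fix a chain x 0, ..., x (n-1) and a point y.  The chain is padded by z beyond n;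
  level k is the norm of the k-th padded point.\<close>
locale chain_refinement = pointed_convex +
  fixes x :: "nat \<Rightarrow> 'a" and n :: nat and y :: 'a
  assumes chain: "orth_chain x n" and new_point: "y \<in> X"
begin

definition pad :: "nat \<Rightarrow> 'a" where "pad k = (if k < n then x k else z)"
definition level :: "nat \<Rightarrow> 'b" where "level k = d z (pad k)"
definition upper :: "nat \<Rightarrow> 'b" where "upper k = (if k = 0 then top else level (k - 1))"

definition fresh :: 'b where "fresh = inf (d y z) (bmeet (\<lambda>i. d y (x i)) n)"
definition slice :: "nat \<Rightarrow> 'b" where "slice k = inf fresh (inf (upper k) (- level k))"

definition patched :: "nat \<Rightarrow> 'a" where
  "patched k = (SOME w. w \<in> X \<and> inf (slice k) (d w y) = bot \<and> inf (- slice k) (d w (pad k)) = bot)"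

text \<open>Beyond n only the patch of z by y on slice n can be nonzero; it is kept if so.\<close>
definition new_len :: nat where "new_len = (if patched n = z then n else Suc n)"

lemma chain_X: "i < n \<Longrightarrow> x i \<in> X" and chain_nonzero: "i < n \<Longrightarrow> x i \<noteq> z"
  using chain unfolding orth_chain_def by auto

lemma pad_X: "pad k \<in> X"
  using chain_X base_point unfolding pad_def by auto

lemma level_bot: "n \<le> k \<Longrightarrow> level k = bot"
  unfolding level_def pad_def using base_point by simp

lemma level_antimono: "i \<le> j \<Longrightarrow> level j \<le> level i"
  using chain level_bot[of j] unfolding orth_chain_def level_def pad_def
  by (cases "j < n"; cases "i = j") auto

lemma pad_orth: "i < j \<Longrightarrow> d (pad i) (pad j) = sup (level i) (level j)"
  using chain level_bot[of j] dist_sym[OF pad_X base_point, of i]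
  unfolding orth_chain_def level_def pad_def by (cases "j < n") auto

lemma slice_le_fresh: "slice k \<le> fresh"
  unfolding slice_def by simp

lemma slice_le_compl_level: "slice k \<le> - level k"
  unfolding slice_def by (simp add: le_infI2)

lemma slice_le_level:
  assumes "i < j"
  shows "slice j \<le> level i"
proof -
  have "slice j \<le> upper j" unfolding slice_def by (meson inf_le1 inf_le2 order_trans)
  also have "upper j = level (j - 1)" using assms unfolding upper_def by simp
  also have "\<dots> \<le> level i" using assms by (intro level_antimono) simp
  finally show ?thesis .
qed

lemma slice_disjoint:
  assumes "i < j"
  shows "inf (slice i) (slice j) = bot"
proof -
  have "inf (slice i) (slice j) \<le> inf (- level i) (level i)"
    using slice_le_compl_level[of i] slice_le_level[OF assms] by (rule inf_mono)
  thus ?thesis by (simp add: le_bot)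
qed

lemma fresh_le_dist: "fresh \<le> d y (pad k)"
  using bmeet_le[of k n "\<lambda>i. d y (x i)"] unfolding fresh_def pad_def
  by (auto intro: le_infI2)

lemma slice_le_dist: "slice k \<le> d y (pad k')" "slice k \<le> d (pad k') y"
  using order_trans[OF slice_le_fresh fresh_le_dist] dist_sym[OF new_point pad_X] by auto

lemma slice_le_norm_y: "slice k \<le> d z y"
  using slice_le_fresh[of k] dist_sym[OF new_point base_point]
  unfolding fresh_def by (auto intro: order_trans)

lemma patched_X: "patched k \<in> X"
  and patched_on_slice: "q \<le> slice k \<Longrightarrow> inf q (d (patched k) y) = bot"
  and patched_off_slice: "q \<le> - slice k \<Longrightarrow> inf q (d (patched k) (pad k)) = bot"
proof -
  have "\<exists>w. w \<in> X \<and> inf (slice k) (d w y) = bot \<and> inf (- slice k) (d w (pad k)) = bot"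
    using patch_exists[OF new_point pad_X] by blast
  hence spec: "patched k \<in> X \<and> inf (slice k) (d (patched k) y) = bot
      \<and> inf (- slice k) (d (patched k) (pad k)) = bot"
    unfolding patched_def by (rule someI_ex)
  show "patched k \<in> X" using spec by simp
  show "q \<le> slice k \<Longrightarrow> inf q (d (patched k) y) = bot"
    by (rule inf_bot_mono[OF _ spec[THEN conjunct2, THEN conjunct1]])
  show "q \<le> - slice k \<Longrightarrow> inf q (d (patched k) (pad k)) = bot"
    by (rule inf_bot_mono[OF _ spec[THEN conjunct2, THEN conjunct2]])
qed

lemma norm_patched: "d z (patched k) = sup (slice k) (level k)"
proof (rule eq_by_cases[of "slice k"])
  have "inf (slice k) (d z (patched k)) = inf (slice k) (d z y)"
    by (rule agree_dist_right[OF patched_X new_point base_point patched_on_slice]) simp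
  also have "\<dots> = inf (slice k) (sup (slice k) (level k))"
    using slice_le_norm_y[of k] by (simp add: inf_absorb1)
  finally show "inf (slice k) (d z (patched k)) = inf (slice k) (sup (slice k) (level k))" .
  have "inf (- slice k) (d z (patched k)) = inf (- slice k) (d z (pad k))"
    by (rule agree_dist_right[OF patched_X pad_X base_point patched_off_slice]) simp
  thus "inf (- slice k) (d z (patched k)) = inf (- slice k) (sup (slice k) (level k))"
    unfolding level_def by (simp add: inf_sup_distrib1)
qed

lemma patched_orth:
  assumes "i < j"
  shows "d (patched i) (patched j) = sup (d z (patched i)) (d z (patched j))"
proof (rule eq_by_three_cases[of "slice i" "slice j"])
  have disj: "slice i \<le> - slice j" "slice j \<le> - slice i"
    using slice_disjoint[OF assms] by (metis inf_shunt inf_commute)+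
  show "inf (slice i) (slice j) = bot" by (rule slice_disjoint[OF assms])
  have "inf (slice i) (d (patched i) (patched j)) = inf (slice i) (d y (patched j))"
    by (rule agree_dist_left[OF patched_X new_point patched_X patched_on_slice]) simp
  also have "\<dots> = inf (slice i) (d y (pad j))"
    by (rule agree_dist_right[OF patched_X pad_X new_point patched_off_slice[OF disj(1)]])
  also have "\<dots> = slice i" using slice_le_dist(1) by (simp add: inf_absorb1)
  finally show "inf (slice i) (d (patched i) (patched j))
      = inf (slice i) (sup (d z (patched i)) (d z (patched j)))"
    unfolding norm_patched by (simp add: inf_absorb1 le_supI1)
  have "inf (slice j) (d (patched i) (patched j)) = inf (slice j) (d (pad i) (patched j))"
    by (rule agree_dist_left[OF patched_X pad_X patched_X patched_off_slice[OF disj(2)]])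
  also have "\<dots> = inf (slice j) (d (pad i) y)"
    by (rule agree_dist_right[OF patched_X new_point pad_X patched_on_slice]) simp
  also have "\<dots> = slice j" using slice_le_dist(2) by (simp add: inf_absorb1)
  finally show "inf (slice j) (d (patched i) (patched j))
      = inf (slice j) (sup (d z (patched i)) (d z (patched j)))"
    unfolding norm_patched by (simp add: inf_absorb1 le_supI2)
  define G where "G = inf (- slice i) (- slice j)"
  have "inf G (d (patched i) (patched j)) = inf G (d (pad i) (patched j))"
    by (rule agree_dist_left[OF patched_X pad_X patched_X patched_off_slice]) (simp add: G_def)
  also have "\<dots> = inf G (d (pad i) (pad j))"
    by (rule agree_dist_right[OF patched_X pad_X pad_X patched_off_slice]) (simp add: G_def)
  also have "\<dots> = inf G (sup (sup (slice i) (level i)) (sup (slice j) (level j)))"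
    unfolding pad_orth[OF assms] G_def by (simp add: inf_sup_distrib1 sup_aci)
  finally show "inf G (d (patched i) (patched j))
      = inf G (sup (d z (patched i)) (d z (patched j)))"
    unfolding norm_patched .
qed

lemma patched_decreasing:
  assumes "i < j"
  shows "d z (patched j) \<le> d z (patched i)"
proof -
  have "sup (slice j) (level j) \<le> level i"
    using slice_le_level[OF assms] level_antimono[of i j] assms by simp
  thus ?thesis unfolding norm_patched by (simp add: le_supI2)
qed

lemma patched_nonzero:
  assumes "k < n"
  shows "patched k \<noteq> z"
proof
  assume "patched k = z"
  hence "level k = bot" using norm_patched[of k] base_point by simp
  thus False using dist_eq_bot[OF base_point chain_X[OF assms]] chain_nonzero[OF assms] assms
    unfolding level_def pad_def by simp
qed

lemma refined_chain: "orth_chain patched new_len"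
  unfolding orth_chain_def
proof (intro conjI allI impI)
  fix i assume "i < new_len"
  show "patched i \<in> X" by (rule patched_X)
  show "patched i \<noteq> z"
    using \<open>i < new_len\<close> patched_nonzero unfolding new_len_def
    by (cases "i < n") (auto simp: less_Suc_eq split: if_splits)
next
  fix i j assume "i < j" "j < new_len"
  show "d (patched i) (patched j) = sup (d z (patched i)) (d z (patched j))"
    by (rule patched_orth) fact
  show "d z (patched j) \<le> d z (patched i)" by (rule patched_decreasing) fact
qed

definition refined :: "'a set" where "refined = insert z (patched ` {..<new_len})"

lemma patched_in_refined: "k \<le> n \<Longrightarrow> patched k \<in> refined"
  unfolding refined_def new_len_def by (cases "k < n") auto

text \<open>Each old chain point is close to the refined chain: off slice i it equals
  patched i, and on slice i it is at distance level i = 0 from z.\<close>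
lemma old_close:
  assumes "i < n"
  shows "close_to d refined (x i)"
  unfolding close_to_def
proof (intro allI impI)
  fix b assume hb: "\<forall>s\<in>refined. b \<le> d (x i) s"
  have pad_i: "pad i = x i" using assms unfolding pad_def by simp
  have "b \<le> d (x i) (patched i)" using hb patched_in_refined[of i] assms by auto
  then have "b \<le> d (patched i) (pad i)"
    using dist_sym[OF chain_X[OF assms] patched_X] by (simp add: pad_i)
  then have "inf (- slice i) b \<le> inf (- slice i) (d (patched i) (pad i))"
    by (rule inf_mono[OF order_refl])
  hence off: "inf (- slice i) b = bot"
    using patched_off_slice[of "- slice i"] by (simp add: le_bot)
  have "d (x i) z = level i"
    unfolding level_def using pad_i dist_sym[OF chain_X[OF assms] base_point] by simp
  moreover have "b \<le> d (x i) z" using hb unfolding refined_def by simp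
  ultimately have "b \<le> level i" by simp
  hence "inf (slice i) b \<le> inf (- level i) (level i)"
    by (rule inf_mono[OF slice_le_compl_level])
  hence on: "inf (slice i) b = bot" by (simp add: le_bot)
  show "b = bot" by (rule eq_by_cases[of "slice i"]) (simp_all add: off on)
qed

text \<open>The slices 0..n exhaust the fresh region, since level n = 0.\<close>
lemma fresh_covered_by_slices:
  assumes "b \<le> fresh" "\<forall>k\<le>n. inf b (slice k) = bot"
  shows "b = bot"
proof -
  have next_level: "b \<le> level k" if "b \<le> upper k" "k \<le> n" for k
  proof -
    have "inf b (slice k) = inf (inf b fresh) (inf (upper k) (- level k))"
      unfolding slice_def by (rule inf_assoc[symmetric])
    also have "\<dots> = inf (inf b (upper k)) (- level k)"
      using assms(1) by (simp add: inf_absorb1 inf_assoc)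
    also have "\<dots> = inf b (- level k)" using that(1) by (simp add: inf_absorb1)
    finally have "inf b (- level k) = bot" using assms(2) that(2) by simp
    thus ?thesis by (simp add: inf_shunt)
  qed
  have "b \<le> level k" if "k \<le> n" for k
    using that
  proof (induction k)
    case 0 then show ?case using next_level by (simp add: upper_def)
  next
    case (Suc k) then show ?case using next_level by (simp add: upper_def)
  qed
  then have "b \<le> level n" by simp
  thus ?thesis using level_bot[of n] by (simp add: le_bot)
qed

text \<open>The new point is close to the refined chain: below all its distances to the
  refined chain, b avoids every slice, hence lies below fresh only at bot.\<close>
lemma new_close: "close_to d refined y"
  unfolding close_to_def
proof (intro allI impI)
  fix b assume hb: "\<forall>s\<in>refined. b \<le> d y s"
  have b_patched: "b \<le> d y (patched k)" if "k \<le> n" for k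
    using hb patched_in_refined[OF that] by blast
  have avoid: "inf b (slice k) = bot" if "k \<le> n" for k
  proof -
    have "inf b (slice k) \<le> inf (slice k) (d (patched k) y)"
      using b_patched[OF that] dist_sym[OF new_point patched_X] by (auto intro: le_infI1)
    thus ?thesis using patched_on_slice[of "slice k" k] by (simp add: le_bot)
  qed
  have "b \<le> d y (pad k)" if "k \<le> n" for k
  proof -
    have "b = inf (- slice k) b" using avoid[OF that] by (simp add: inf_shunt inf_absorb2)
    also have "\<dots> \<le> inf (- slice k) (d y (patched k))" using b_patched[OF that] by (auto intro: le_infI2)
    also have "\<dots> = inf (- slice k) (d y (pad k))"
      by (rule agree_dist_right[OF patched_X pad_X new_point patched_off_slice]) simp
    finally show ?thesis by simp
  qed
  moreover have "b \<le> d y z" using hb unfolding refined_def by simp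
  ultimately have "b \<le> fresh"
    unfolding fresh_def pad_def by (auto intro!: le_bmeet) (metis less_imp_le_nat)
  thus "b = bot" using fresh_covered_by_slices avoid by blast
qed

end

context pointed_convex
begin

lemma chain_refine:
  assumes "orth_chain x n" "y \<in> X"
  shows "\<exists>x' n'. orth_chain x' n' \<and> (\<forall>i<n. close_to d (insert z (x' ` {..<n'})) (x i))
           \<and> close_to d (insert z (x' ` {..<n'})) y"
proof -
  interpret chain_refinement X d z x n y
    using assms by unfold_locales
  show ?thesis using refined_chain old_close new_close unfolding refined_def by blast
qed

lemma chain_set_X: "orth_chain x n \<Longrightarrow> insert z (x ` {..<n}) \<subseteq> X"
  using base_point unfolding orth_chain_def by auto

lemma finite_set_close_to_chain:
  "finite F \<Longrightarrow> F \<subseteq> X \<Longrightarrow> \<exists>x n. orth_chain x n \<and> (\<forall>f\<in>F. close_to d (insert z (x ` {..<n})) f)"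
proof (induction F rule: finite_induct)
  case empty
  have "orth_chain (\<lambda>_. z) 0" unfolding orth_chain_def by simp
  thus ?case by blast
next
  case (insert y F)
  then obtain x n where chain: "orth_chain x n"
    and close: "\<forall>f\<in>F. close_to d (insert z (x ` {..<n})) f" by auto
  obtain x' n' where chain': "orth_chain x' n'"
    and old: "\<forall>i<n. close_to d (insert z (x' ` {..<n'})) (x i)"
    and new: "close_to d (insert z (x' ` {..<n'})) y"
    using chain_refine[OF chain] insert.prems by blast
  have "\<forall>s\<in>insert z (x ` {..<n}). close_to d (insert z (x' ` {..<n'})) s"
    using old close_to_member[OF _ base_point] by auto
  hence "\<forall>f\<in>F. close_to d (insert z (x' ` {..<n'})) f"
    using close close_to_trans[OF chain_set_X[OF chain] chain_set_X[OF chain']] insert.prems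
    by blast
  thus ?case using chain' new by blast
qed

lemma chain_is_base:
  assumes chain: "orth_chain x n" and close: "\<forall>y\<in>X. close_to d (insert z (x ` {..<n})) y"
  shows "is_base X d z (map x [0..<n])"
proof -
  have xX: "x i \<in> X" "x i \<noteq> z" if "i < n" for i
    using chain that unfolding orth_chain_def by auto
  have orth: "d (x i) (x j) = sup (d z (x i)) (d z (x j))" if "i < j" "j < n" for i j
    using chain that unfolding orth_chain_def by blast
  have orth_sym: "orthogonal d z (x i) (x j)" if "i < n" "j < n" "i \<noteq> j" for i j
    using that orth[of i j] orth[of j i] dist_sym[OF xX(1) xX(1), of i j]
    unfolding orthogonal_def by (auto simp: sup_commute linorder_neq_iff)
  have inj: "x i \<noteq> x j" if "i < n" "j < n" "i \<noteq> j" for i j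
  proof
    assume "x i = x j"
    hence "d z (x i) = bot" using orth_sym[OF that] xX that unfolding orthogonal_def by simp
    thus False using dist_eq_bot[OF base_point xX(1)] xX(2) that by auto
  qed
  have orth_set: "orthogonal_set X d z (x ` {..<n})"
    unfolding orthogonal_set_def
  proof (intro conjI ballI impI)
    show "finite (x ` {..<n})" by simp
    show "x ` {..<n} \<subseteq> X" "z \<notin> x ` {..<n}" using xX by auto
  next
    fix a b assume "a \<in> x ` {..<n}" "b \<in> x ` {..<n}" "a \<noteq> b"
    then show "orthogonal d z a b" using orth_sym by auto
  qed
  have fin: "finite (insert z (x ` {..<n}))" by simp
  have "\<forall>y\<in>X. conv_comb_of d (insert z (x ` {..<n})) y"
    using close by (blast intro: close_to_conv_comb[OF fin])
  hence "referential X d z (set (map x [0..<n]))"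
    using orth_set unfolding referential_def by (simp add: atLeast0LessThan)
  moreover have "distinct (map x [0..<n])"
    using inj by (auto simp: distinct_conv_nth)
  moreover have "d z (x j) \<le> d z (x i)" if "i < j" "j < n" for i j
    using chain that unfolding orth_chain_def by blast
  ultimately show ?thesis unfolding is_base_def by simp
qed

end

theorem mainTheorem4:
  fixes X :: "'a set" and d :: "'a \<Rightarrow> 'a \<Rightarrow> 'b::boolean_algebra" and z :: 'a
  assumes "CFG_space X d" and "z \<in> X"
  shows "\<exists>xs. is_base X d z xs"
proof -
  obtain F where F: "finite F" "F \<subseteq> X" "\<forall>x\<in>X. conv_comb_of d F x"
    and "bool_metric_space X d" "bconvex X d"
    using assms(1) unfolding CFG_space_def by blast
  then interpret pointed_convex X d z
    using assms(2) by unfold_locales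
  obtain x n where chain: "orth_chain x n"
    and F_close: "\<forall>f\<in>F. close_to d (insert z (x ` {..<n})) f"
    using finite_set_close_to_chain[OF F(1,2)] by blast
  have "close_to d (insert z (x ` {..<n})) y" if "y \<in> X" for y
  proof (rule close_to_trans[OF F(2) chain_set_X[OF chain] that _ F_close])
    show "close_to d F y" using F(3) that by (blast intro: conv_comb_close_to)
  qed
  thus ?thesis using chain_is_base[OF chain] by blast
qed

end
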